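(* In the setting of the context, fix two distinct exposures $d_k\ne d_l$ and assume $\pi_{ij}(d_k,d_l)>0$ for all $i\ne j$. Define $$\widehat{\mathrm{Cov}}[\widehat{y^T_{HT}}(d_k),\widehat{y^T_{HT}}(d_l)] = \sum_{i\in U}\sum_{j\in U\setminus\{i\}}\frac{\mathbf{I}(D_i=d_k)\mathbf{I}(D_j=d_l)}{\pi_{ij}(d_k,d_l)}\,\frac{y_i(d_k)}{\pi_i(d_k)}\frac{y_j(d_l)}{\pi_j(d_l)}\big[\pi_{ij}(d_k,d_l)-\pi_i(d_k)\pi_j(d_l)\big] - \sum_{i\in U}\left[\frac{\mathbf{I}(D_i=d_k)y_i(d_k)^2}{2\pi_i(d_k)}+\frac{\mathbf{I}(D_i=d_l)y_i(d_l)^2}{2\pi_i(d_l)}\right].$$ Then $\mathrm{E}\big[\widehat{\mathrm{Cov}}[\widehat{y^T_{HT}}(d_k),\widehat{y^T_{HT}}(d_l)]\big]\le \mathrm{Cov}\big[\widehat{y^T_{HT}}(d_k),\widehat{y^T_{HT}}(d_l)\big]$, and equality holds if $y_i(d_k)=y_i(d_l)$ for all $i\in U$.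
   Context: A finite population $U$ of units $i=1,\dots,N$. A random treatment assignment vector $\mathbf{Z}$ takes values in $\Omega=\{\mathbf{z}\in\{1,\dots,M\}^N:p_{\mathbf{z}}>0\}$ with known probabilities $\Pr(\mathbf{Z}=\mathbf{z})=p_{\mathbf{z}}$. An exposure mapping $f:\Omega\times\Theta\to\Delta=\{d_1,\dots,d_K\}$ with unit traits $\theta_i$ gives exposures $D_i=f(\mathbf{Z},\theta_i)$. Write $\pi_i(d)=\Pr(D_i=d)$ and $\pi_{ij}(d,d')=\Pr(D_i=d,D_j=d')$; assume $0<\pi_i(d_k)<1$ for all $i,k$. Potential outcomes $y_i(d_1),\dots,y_i(d_K)$ are fixed real numbers; the observed outcome is $y_i(D_i)$. The Horvitz–Thompson total estimator is $\widehat{y^T_{HT}}(d)=\sum_{i=1}^N\mathbf{I}(D_i=d)\,y_i(d)/\pi_i(d)$. Expectations and covariances are with respect to the randomization distribution of $\mathbf{Z}$. *)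

theory Defs
  imports "HOL-Probability.Probability"
begin

text \<open>Units are the elements of a finite type 'u (U = UNIV, N = CARD('u)).
Assignments are vectors z :: 'u \<Rightarrow> nat with entries in {1..M}; the random
assignment Z is a pmf (its support is \<Omega>). Exposure of unit i under z is
f z (theta i).\<close>

definition expo_prob :: "('u \<Rightarrow> nat) pmf \<Rightarrow> (('u \<Rightarrow> nat) \<Rightarrow> 'th \<Rightarrow> 'd) \<Rightarrow> ('u \<Rightarrow> 'th) \<Rightarrow> 'u \<Rightarrow> 'd \<Rightarrow> real" where
  "expo_prob Z f \<theta> i d = measure_pmf.prob Z {z. f z (\<theta> i) = d}"

definition joint_expo_prob :: "('u \<Rightarrow> nat) pmf \<Rightarrow> (('u \<Rightarrow> nat) \<Rightarrow> 'th \<Rightarrow> 'd) \<Rightarrow> ('u \<Rightarrow> 'th) \<Rightarrow> 'u \<Rightarrow> 'u \<Rightarrow> 'd \<Rightarrow> 'd \<Rightarrow> real" where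
  "joint_expo_prob Z f \<theta> i j d d' = measure_pmf.prob Z {z. f z (\<theta> i) = d \<and> f z (\<theta> j) = d'}"

definition HT_total :: "('u::finite \<Rightarrow> nat) pmf \<Rightarrow> (('u \<Rightarrow> nat) \<Rightarrow> 'th \<Rightarrow> 'd) \<Rightarrow> ('u \<Rightarrow> 'th) \<Rightarrow> ('u \<Rightarrow> 'd \<Rightarrow> real) \<Rightarrow> 'd \<Rightarrow> ('u \<Rightarrow> nat) \<Rightarrow> real" where
  "HT_total Z f \<theta> y d z = (\<Sum>i\<in>UNIV. of_bool (f z (\<theta> i) = d) * y i d / expo_prob Z f \<theta> i d)"

definition cov_hat :: "('u::finite \<Rightarrow> nat) pmf \<Rightarrow> (('u \<Rightarrow> nat) \<Rightarrow> 'th \<Rightarrow> 'd) \<Rightarrow> ('u \<Rightarrow> 'th) \<Rightarrow> ('u \<Rightarrow> 'd \<Rightarrow> real) \<Rightarrow> 'd \<Rightarrow> 'd \<Rightarrow> ('u \<Rightarrow> nat) \<Rightarrow> real" where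
  "cov_hat Z f \<theta> y dk dl z =
     (\<Sum>i\<in>UNIV. \<Sum>j\<in>UNIV - {i}.
        of_bool (f z (\<theta> i) = dk) * of_bool (f z (\<theta> j) = dl) / joint_expo_prob Z f \<theta> i j dk dl
        * (y i dk / expo_prob Z f \<theta> i dk) * (y j dl / expo_prob Z f \<theta> j dl)
        * (joint_expo_prob Z f \<theta> i j dk dl - expo_prob Z f \<theta> i dk * expo_prob Z f \<theta> j dl))
   - (\<Sum>i\<in>UNIV. of_bool (f z (\<theta> i) = dk) * (y i dk)\<^sup>2 / (2 * expo_prob Z f \<theta> i dk)
              + of_bool (f z (\<theta> i) = dl) * (y i dl)\<^sup>2 / (2 * expo_prob Z f \<theta> i dl))"

definition pmf_cov :: "'a pmf \<Rightarrow> ('a \<Rightarrow> real) \<Rightarrow> ('a \<Rightarrow> real) \<Rightarrow> real" where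
  "pmf_cov Z X Y = measure_pmf.expectation Z
     (\<lambda>z. (X z - measure_pmf.expectation Z X) * (Y z - measure_pmf.expectation Z Y))"

end

theory Submission
  imports Defs
begin

text \<open>Since \<open>d\<^sub>k \<noteq> d\<^sub>l\<close>, no unit can be exposed to both at once, so \<open>\<pi>\<^sub>i\<^sub>i(d\<^sub>k,d\<^sub>l) = 0\<close> and
the diagonal of the usual double-sum formula for the covariance of the two Horvitz--Thompson
totals reduces to \<open>-\<Sum>\<^sub>i y\<^sub>i(d\<^sub>k) y\<^sub>i(d\<^sub>l)\<close>, which cannot be estimated unbiasedly. The estimator keeps
the off-diagonal part, which is unbiased, and replaces the diagonal by the unbiased estimate of
\<open>-\<Sum>\<^sub>i (y\<^sub>i(d\<^sub>k)\<^sup>2 + y\<^sub>i(d\<^sub>l)\<^sup>2)/2\<close>. Hence its bias is \<open>-\<Sum>\<^sub>i (y\<^sub>i(d\<^sub>k) - y\<^sub>i(d\<^sub>l))\<^sup>2/2 \<le> 0\<close>, which vanishes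
when the two potential outcomes agree.\<close>

lemma finite_set_pmf_bounded_assignment:
  fixes Z :: "('u::finite \<Rightarrow> nat) pmf"
  assumes "\<forall>z\<in>set_pmf Z. \<forall>i. z i \<in> {1..M}"
  shows "finite (set_pmf Z)"
proof (rule finite_subset)
  show "set_pmf Z \<subseteq> {g. \<forall>x. (x \<in> UNIV \<longrightarrow> g x \<in> {1..M}) \<and> (x \<notin> UNIV \<longrightarrow> g x = 0)}"
    using assms by auto
  show "finite {g. \<forall>x. (x \<in> (UNIV::'u set) \<longrightarrow> g x \<in> {1..M}) \<and> (x \<notin> UNIV \<longrightarrow> g x = 0)}"
    by (rule finite_set_of_finite_funs) auto
qed

lemma expectation_of_bool:
  "measure_pmf.expectation Z (\<lambda>z. of_bool (P z) :: real) = measure_pmf.prob Z {z. P z}"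
proof -
  have "(\<lambda>z. of_bool (P z) :: real) = indicator {z. P z}" by (auto simp: indicator_def)
  then show ?thesis by simp
qed

lemma pmf_cov_eq_expectation_mult:
  assumes "finite (set_pmf Z)"
  shows "pmf_cov Z X Y = measure_pmf.expectation Z (\<lambda>z. X z * Y z)
           - measure_pmf.expectation Z X * measure_pmf.expectation Z Y"
proof -
  let ?E = "measure_pmf.expectation Z"
  have "(\<lambda>z. (X z - ?E X) * (Y z - ?E Y)) = (\<lambda>z. X z * Y z - (X z * ?E Y + Y z * ?E X) + ?E X * ?E Y)"
    by (auto simp: algebra_simps)
  then have "pmf_cov Z X Y = ?E (\<lambda>z. X z * Y z - (X z * ?E Y + Y z * ?E X) + ?E X * ?E Y)"
    unfolding pmf_cov_def by simp
  also have "\<dots> = ?E (\<lambda>z. X z * Y z) - (?E X * ?E Y + ?E Y * ?E X) + ?E X * ?E Y"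
    by (simp add: integrable_measure_pmf_finite[OF assms] integral_add integral_diff)
  finally show ?thesis by simp
qed

lemma joint_expo_prob_same_unit:
  assumes "d \<noteq> d'"
  shows "joint_expo_prob Z f \<theta> i i d d' = 0"
proof -
  have empty: "{z. f z (\<theta> i) = d \<and> f z (\<theta> i) = d'} = {}" using assms by auto
  show ?thesis unfolding joint_expo_prob_def empty by simp
qed

lemma expectation_HT_total:
  assumes fin: "finite (set_pmf Z)" and nz: "\<And>i. expo_prob Z f \<theta> i d \<noteq> 0"
  shows "measure_pmf.expectation Z (HT_total Z f \<theta> y d) = (\<Sum>i\<in>UNIV. y i d)"
proof -
  have "measure_pmf.expectation Z (HT_total Z f \<theta> y d)
      = (\<Sum>i\<in>UNIV. measure_pmf.expectation Z (\<lambda>z. of_bool (f z (\<theta> i) = d))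
                     * (y i d / expo_prob Z f \<theta> i d))"
    unfolding HT_total_def
    by (simp add: integrable_measure_pmf_finite[OF fin] Bochner_Integration.integral_sum)
  also have "\<dots> = (\<Sum>i\<in>UNIV. y i d)"
    using nz by (simp add: expectation_of_bool flip: expo_prob_def)
  finally show ?thesis .
qed

lemma expectation_HT_total_mult:
  assumes fin: "finite (set_pmf Z)"
  shows "measure_pmf.expectation Z (\<lambda>z. HT_total Z f \<theta> y d z * HT_total Z f \<theta> y d' z)
       = (\<Sum>i\<in>UNIV. \<Sum>j\<in>UNIV. joint_expo_prob Z f \<theta> i j d d'
            * ((y i d / expo_prob Z f \<theta> i d) * (y j d' / expo_prob Z f \<theta> j d')))"
proof -
  define c where "c = (\<lambda>i j. (y i d / expo_prob Z f \<theta> i d) * (y j d' / expo_prob Z f \<theta> j d'))"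
  have "(\<lambda>z. HT_total Z f \<theta> y d z * HT_total Z f \<theta> y d' z)
      = (\<lambda>z. \<Sum>i\<in>UNIV. \<Sum>j\<in>UNIV. of_bool (f z (\<theta> i) = d \<and> f z (\<theta> j) = d') * c i j)"
    unfolding HT_total_def c_def by (auto simp: sum_product of_bool_conj algebra_simps)
  then show ?thesis
    by (simp add: c_def integrable_measure_pmf_finite[OF fin] Bochner_Integration.integral_sum
        expectation_of_bool flip: joint_expo_prob_def del: sum_of_bool_mult_eq)
qed

lemma pmf_cov_HT_total:
  assumes fin: "finite (set_pmf Z)" and "d \<noteq> d'"
    and nz: "\<And>i. expo_prob Z f \<theta> i d \<noteq> 0" "\<And>i. expo_prob Z f \<theta> i d' \<noteq> 0"
  shows "pmf_cov Z (HT_total Z f \<theta> y d) (HT_total Z f \<theta> y d')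
       = (\<Sum>i\<in>UNIV. \<Sum>j\<in>UNIV - {i}. (y i d / expo_prob Z f \<theta> i d) * (y j d' / expo_prob Z f \<theta> j d')
            * (joint_expo_prob Z f \<theta> i j d d' - expo_prob Z f \<theta> i d * expo_prob Z f \<theta> j d'))
         - (\<Sum>i\<in>UNIV. y i d * y i d')"
proof -
  define p where "p = (\<lambda>i. expo_prob Z f \<theta> i d)"
  define p' where "p' = (\<lambda>i. expo_prob Z f \<theta> i d')"
  define J where "J = (\<lambda>i j. joint_expo_prob Z f \<theta> i j d d')"
  define c where "c = (\<lambda>i j. (y i d / p i) * (y j d' / p' j))"
  have y_eq: "y i d * y j d' = c i j * (p i * p' j)" for i j
    using nz unfolding c_def p_def p'_def by simp
  have row_J: "(\<Sum>j\<in>UNIV. J i j * c i j) = (\<Sum>j\<in>UNIV - {i}. J i j * c i j)" for i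
    by (simp add: sum.remove[of UNIV i] J_def joint_expo_prob_same_unit[OF \<open>d \<noteq> d'\<close>])
  have row_y: "(\<Sum>j\<in>UNIV. y i d * y j d') = y i d * y i d' + (\<Sum>j\<in>UNIV - {i}. c i j * (p i * p' j))"
    for i
    by (subst sum.remove[of UNIV i]) (auto simp: y_eq)
  have "pmf_cov Z (HT_total Z f \<theta> y d) (HT_total Z f \<theta> y d')
      = (\<Sum>i\<in>UNIV. \<Sum>j\<in>UNIV. J i j * c i j) - (\<Sum>i\<in>UNIV. \<Sum>j\<in>UNIV. y i d * y j d')"
    unfolding pmf_cov_eq_expectation_mult[OF fin] expectation_HT_total_mult[OF fin]
      expectation_HT_total[OF fin nz(1)] expectation_HT_total[OF fin nz(2)]
    by (simp add: J_def c_def p_def p'_def sum_product)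
  also have "\<dots> = (\<Sum>i\<in>UNIV. \<Sum>j\<in>UNIV - {i}. J i j * c i j)
      - (\<Sum>i\<in>UNIV. y i d * y i d' + (\<Sum>j\<in>UNIV - {i}. c i j * (p i * p' j)))"
    by (simp only: row_J row_y)
  also have "\<dots> = (\<Sum>i\<in>UNIV. \<Sum>j\<in>UNIV - {i}. c i j * (J i j - p i * p' j)) - (\<Sum>i\<in>UNIV. y i d * y i d')"
    by (simp add: right_diff_distrib sum_subtractf sum.distrib algebra_simps)
  finally show ?thesis unfolding c_def p_def p'_def J_def .
qed

lemma expectation_cov_hat:
  assumes fin: "finite (set_pmf Z)"
    and nz: "\<And>i. expo_prob Z f \<theta> i d \<noteq> 0" "\<And>i. expo_prob Z f \<theta> i d' \<noteq> 0"
    and J_nz: "\<And>i j. i \<noteq> j \<Longrightarrow> joint_expo_prob Z f \<theta> i j d d' \<noteq> 0"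
  shows "measure_pmf.expectation Z (cov_hat Z f \<theta> y d d')
       = (\<Sum>i\<in>UNIV. \<Sum>j\<in>UNIV - {i}. (y i d / expo_prob Z f \<theta> i d) * (y j d' / expo_prob Z f \<theta> j d')
            * (joint_expo_prob Z f \<theta> i j d d' - expo_prob Z f \<theta> i d * expo_prob Z f \<theta> j d'))
         - (\<Sum>i\<in>UNIV. (y i d)\<^sup>2 / 2 + (y i d')\<^sup>2 / 2)"
proof -
  define p where "p = (\<lambda>i. expo_prob Z f \<theta> i d)"
  define p' where "p' = (\<lambda>i. expo_prob Z f \<theta> i d')"
  define J where "J = (\<lambda>i j. joint_expo_prob Z f \<theta> i j d d')"
  define c where "c = (\<lambda>i j. (y i d / p i) * (y j d' / p' j) * (J i j - p i * p' j))"
  define a where "a = (\<lambda>i. (y i d)\<^sup>2 / (2 * p i))"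
  define b where "b = (\<lambda>i. (y i d')\<^sup>2 / (2 * p' i))"
  have E_I: "measure_pmf.expectation Z (\<lambda>z. of_bool (f z (\<theta> i) = d)) = p i"
    "measure_pmf.expectation Z (\<lambda>z. of_bool (f z (\<theta> i) = d')) = p' i"
    "measure_pmf.expectation Z (\<lambda>z. of_bool (f z (\<theta> i) = d \<and> f z (\<theta> j) = d')) = J i j" for i j
    unfolding p_def p'_def J_def expo_prob_def joint_expo_prob_def expectation_of_bool by simp_all
  have regroup: "cov_hat Z f \<theta> y d d' = (\<lambda>z.
      (\<Sum>i\<in>UNIV. \<Sum>j\<in>UNIV - {i}. of_bool (f z (\<theta> i) = d \<and> f z (\<theta> j) = d') * (c i j / J i j))
    - (\<Sum>i\<in>UNIV. of_bool (f z (\<theta> i) = d) * a i + of_bool (f z (\<theta> i) = d') * b i))"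
    unfolding cov_hat_def a_def b_def c_def J_def p_def p'_def
    by (rule ext) (simp add: of_bool_conj ac_simps)
  have "measure_pmf.expectation Z (cov_hat Z f \<theta> y d d')
      = (\<Sum>i\<in>UNIV. \<Sum>j\<in>UNIV - {i}. J i j * (c i j / J i j)) - (\<Sum>i\<in>UNIV. p i * a i + p' i * b i)"
    unfolding regroup
    by (simp add: integrable_measure_pmf_finite[OF fin] Bochner_Integration.integral_sum
        integral_diff integral_add E_I del: sum_of_bool_mult_eq)
  also have "\<dots> = (\<Sum>i\<in>UNIV. \<Sum>j\<in>UNIV - {i}. c i j) - (\<Sum>i\<in>UNIV. (y i d)\<^sup>2 / 2 + (y i d')\<^sup>2 / 2)"
    using nz J_nz by (simp add: a_def b_def p_def p'_def J_def)
  finally show ?thesis unfolding c_def p_def p'_def J_def .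
qed

theorem mainTheorem2:
  fixes Z :: "('u::finite \<Rightarrow> nat) pmf" and M :: nat
    and f :: "('u \<Rightarrow> nat) \<Rightarrow> 'th \<Rightarrow> 'd" and \<theta> :: "'u \<Rightarrow> 'th"
    and \<Delta> :: "'d set" and y :: "'u \<Rightarrow> 'd \<Rightarrow> real" and dk dl :: 'd
  assumes assign: "\<forall>z\<in>set_pmf Z. \<forall>i. z i \<in> {1..M}"
    and Delta_fin: "finite \<Delta>"
    and expo_range: "\<forall>z\<in>set_pmf Z. \<forall>t. f z t \<in> \<Delta>"
    and pos: "\<forall>i. \<forall>d\<in>\<Delta>. 0 < expo_prob Z f \<theta> i d \<and> expo_prob Z f \<theta> i d < 1"
    and dk: "dk \<in> \<Delta>" and dl: "dl \<in> \<Delta>" and dkl: "dk \<noteq> dl"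
    and joint_pos: "\<forall>i j. i \<noteq> j \<longrightarrow> 0 < joint_expo_prob Z f \<theta> i j dk dl"
  shows "measure_pmf.expectation Z (cov_hat Z f \<theta> y dk dl)
           \<le> pmf_cov Z (HT_total Z f \<theta> y dk) (HT_total Z f \<theta> y dl)
         \<and> ((\<forall>i. y i dk = y i dl) \<longrightarrow>
             measure_pmf.expectation Z (cov_hat Z f \<theta> y dk dl)
             = pmf_cov Z (HT_total Z f \<theta> y dk) (HT_total Z f \<theta> y dl))"
proof -
  have fin: "finite (set_pmf Z)" using finite_set_pmf_bounded_assignment[OF assign] .
  have nz: "\<And>i. expo_prob Z f \<theta> i dk \<noteq> 0" "\<And>i. expo_prob Z f \<theta> i dl \<noteq> 0"
    using pos dk dl by (metis less_irrefl)+
  have J_nz: "\<And>i j. i \<noteq> j \<Longrightarrow> joint_expo_prob Z f \<theta> i j dk dl \<noteq> 0"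
    using joint_pos by (metis less_irrefl)
  have "pmf_cov Z (HT_total Z f \<theta> y dk) (HT_total Z f \<theta> y dl)
      - measure_pmf.expectation Z (cov_hat Z f \<theta> y dk dl)
      = (\<Sum>i\<in>UNIV. (y i dk)\<^sup>2 / 2 + (y i dl)\<^sup>2 / 2) - (\<Sum>i\<in>UNIV. y i dk * y i dl)"
    using pmf_cov_HT_total[OF fin dkl nz, of y] expectation_cov_hat[OF fin nz J_nz, of y] by simp
  also have "\<dots> = (\<Sum>i\<in>UNIV. (y i dk - y i dl)\<^sup>2 / 2)"
    by (simp add: sum_subtractf[symmetric] power2_diff field_simps)
  finally have bias: "pmf_cov Z (HT_total Z f \<theta> y dk) (HT_total Z f \<theta> y dl)
      - measure_pmf.expectation Z (cov_hat Z f \<theta> y dk dl) = (\<Sum>i\<in>UNIV. (y i dk - y i dl)\<^sup>2 / 2)" .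
  have "0 \<le> (\<Sum>i\<in>UNIV. (y i dk - y i dl)\<^sup>2 / 2)" by (intro sum_nonneg) simp
  then show ?thesis using bias by auto
qed

end
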